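(* Let $(i,j,t,u,v)$ be an arbitrary permutation of $(1,2,3,4,5)$. The monomials $x_i^2x_jx_t^3x_u^3x_v^3$ with $i<j$, and $x_i^3x_j^4x_t^3x_u^7x_v^7$ with $i<j<t$, are strictly inadmissible in $P_5$.
   Context: $P_k=\mathbb F_2[x_1,\dots,x_k]$, $\deg x_i=1$, with the standard action of the mod-2 Steenrod algebra $\mathcal A$. $\mathcal A_s$ is the sub-Hopf algebra generated by $Sq^i$, $0\le i\le2^s$, and $\mathcal A_s^+=\mathcal A^+\cap\mathcal A_s$. For a monomial $x$, $\nu_j(x)$ is the exponent of $x_j$, $\alpha_i(a)$ the $i$-th binary digit of $a$, $\omega(x)=(\omega_i(x))$ with $\omega_i(x)=\sum_j\alpha_{i-1}(\nu_j(x))$, $\sigma(x)=(\nu_1(x),\dots,\nu_k(x))$, both ordered left-lexicographically; for monomials of equal degree $u<v$ iff $\omega(u)<\omega(v)$, or $\omega(u)=\omega(v)$ and $\sigma(u)<\sigma(v)$. A monomial $u$ is strictly inadmissible if there exist monomials $v_1,\dots,v_r<u$ with $u+\sum_jv_j\in\mathcal A_{s-1}^+P_k$, where $s=\max\{i:\omega_i(u)>0\}$. *)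

theory Defs
  imports Main
begin

(* A monomial of P_k = F_2[x_1,...,x_k] is its exponent function: a n = nu_n(a) for
   1 <= n <= k, and a n = 0 otherwise.  A polynomial over F_2 is the finite set of
   monomials occurring with coefficient 1; addition is symmetric difference. *)
type_synonym mono = "nat \<Rightarrow> nat"
type_synonym poly = "mono set"

definition is_mono :: "nat \<Rightarrow> mono \<Rightarrow> bool" where
  "is_mono k a \<longleftrightarrow> (\<forall>n. (n = 0 \<or> k < n) \<longrightarrow> a n = 0)"

definition mdeg :: "nat \<Rightarrow> mono \<Rightarrow> nat" where
  "mdeg k a = (\<Sum>j=1..k. a j)"

definition padd :: "poly \<Rightarrow> poly \<Rightarrow> poly" where
  "padd f g = (f - g) \<union> (g - f)"

definition psum :: "mono list \<Rightarrow> poly" where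
  "psum vs = foldr (\<lambda>v acc. padd {v} acc) vs {}"

(* Sq^i on a monomial, by Sq^i(x^a) = binom(a,i) x^(a+i) and the Cartan formula *)
definition Sq_mono :: "nat \<Rightarrow> nat \<Rightarrow> mono \<Rightarrow> poly" where
  "Sq_mono k i a = {(\<lambda>n. a n + d n) | d. is_mono k d \<and> (\<Sum>j=1..k. d j) = i
       \<and> (\<forall>j\<in>{1..k}. odd (a j choose d j))}"

(* Sq^i extended additively (over F_2) to polynomials *)
definition Sq :: "nat \<Rightarrow> nat \<Rightarrow> poly \<Rightarrow> poly" where
  "Sq k i f = {b. odd (card {a\<in>f. b \<in> Sq_mono k i a})}"

(* hit k s = A_s^+ P_k : the A_s-submodule of P_k generated by the images of
   Sq^i, 0 < i <= 2^s (A_s is generated by Sq^i, 0 <= i <= 2^s) *)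
inductive_set hit :: "nat \<Rightarrow> nat \<Rightarrow> poly set" for k s where
  hit_zero: "{} \<in> hit k s"
| hit_gen: "finite f \<Longrightarrow> (\<forall>a\<in>f. is_mono k a) \<Longrightarrow> 0 < i \<Longrightarrow> i \<le> 2 ^ s
              \<Longrightarrow> Sq k i f \<in> hit k s"
| hit_Sq: "f \<in> hit k s \<Longrightarrow> i \<le> 2 ^ s \<Longrightarrow> Sq k i f \<in> hit k s"
| hit_add: "f \<in> hit k s \<Longrightarrow> g \<in> hit k s \<Longrightarrow> padd f g \<in> hit k s"

definition alpha :: "nat \<Rightarrow> nat \<Rightarrow> nat" where
  "alpha m a = a div 2 ^ m mod 2"

definition omega :: "nat \<Rightarrow> mono \<Rightarrow> nat \<Rightarrow> nat" where
  "omega k a i = (\<Sum>j=1..k. alpha (i - 1) (a j))"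

definition lex_less :: "(nat \<Rightarrow> nat) \<Rightarrow> (nat \<Rightarrow> nat) \<Rightarrow> bool" where
  "lex_less f g \<longleftrightarrow> (\<exists>m\<ge>1. (\<forall>i. 1 \<le> i \<and> i < m \<longrightarrow> f i = g i) \<and> f m < g m)"

definition sigma_less :: "nat \<Rightarrow> mono \<Rightarrow> mono \<Rightarrow> bool" where
  "sigma_less k a b \<longleftrightarrow> (\<exists>m\<in>{1..k}. (\<forall>j. 1 \<le> j \<and> j < m \<longrightarrow> a j = b j) \<and> a m < b m)"

definition mono_less :: "nat \<Rightarrow> mono \<Rightarrow> mono \<Rightarrow> bool" where
  "mono_less k u v \<longleftrightarrow> lex_less (omega k u) (omega k v)
      \<or> ((\<forall>i\<ge>1. omega k u i = omega k v i) \<and> sigma_less k u v)"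

definition max_s :: "nat \<Rightarrow> mono \<Rightarrow> nat" where
  "max_s k u = Max {i. 1 \<le> i \<and> 0 < omega k u i}"

definition strictly_inadmissible :: "nat \<Rightarrow> mono \<Rightarrow> bool" where
  "strictly_inadmissible k u \<longleftrightarrow>
     (\<exists>vs. (\<forall>v\<in>set vs. is_mono k v \<and> mdeg k v = mdeg k u \<and> mono_less k v u)
        \<and> padd {u} (psum vs) \<in> hit k (max_s k u - 1))"

end

theory Submission
  imports Defs
begin

text \<open>Each monomial is exhibited as the leading term of an explicit element of
  \<open>\<A>\<^sub>s\<^sub>-\<^sub>1\<^sup>+ P\<^sub>5\<close>: writing monomials by their exponent vectors in the positions
  (i, j, t, u, v), Cartan's formula gives
  \<open>Sq\<^sup>1(1,1,3,3,3) = (2,1,3,3,3) + \<Sigma> v\<close> and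
  \<open>Sq\<^sup>1(3,3,3,7,7) + Sq\<^sup>2(2,3,3,7,7) = (3,4,3,7,7) + \<Sigma> v\<close>, where every remaining
  monomial \<open>v\<close> is smaller, either because its \<open>\<omega>\<close>-vector drops (a carry pushes a digit
  into a higher position) or because only the order of the exponents changes and
  \<open>\<sigma>(v) < \<sigma>(u)\<close>. The finitely many instances are verified by evaluating a
  certificate whose soundness is proved in general.\<close>

definition mono_of :: "nat list \<Rightarrow> mono" where
  "mono_of es n = (if 0 < n \<and> n \<le> length es then es ! (n - 1) else 0)"

lemma mono_of_map_upt:
  "mono_of (map g [1..<k]) = (\<lambda>n. if 0 < n \<and> n < k then g n else 0)"
  by (rule ext) (auto simp add: mono_of_def nth_map_upt simp del: upt_Suc)

lemma mono_of_map_upt_is_mono: "is_mono k d \<Longrightarrow> mono_of (map d [1..<Suc k]) = d"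
  unfolding mono_of_map_upt is_mono_def by auto

lemma is_mono_mono_of: "length es = k \<Longrightarrow> is_mono k (mono_of es)"
  by (auto simp: is_mono_def mono_of_def)

lemma mono_of_map2_add:
  "length ds = length es \<Longrightarrow> mono_of (map2 (+) es ds) = (\<lambda>n. mono_of es n + mono_of ds n)"
  by (rule ext) (auto simp: mono_of_def)

lemma inj_on_mono_of: "inj_on mono_of {xs. length xs = k}"
proof (rule inj_onI, rule nth_equalityI)
  fix xs ys :: "nat list" and m
  assume "xs \<in> {xs. length xs = k}" "ys \<in> {xs. length xs = k}" "mono_of xs = mono_of ys"
    and "m < length xs"
  then have "mono_of xs (Suc m) = mono_of ys (Suc m)" by simp
  with \<open>m < length xs\<close> show "xs ! m = ys ! m"
    using \<open>xs \<in> _\<close> \<open>ys \<in> _\<close> by (simp add: mono_of_def)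
qed simp

lemma sum_mono_of:
  assumes "length es = k"
  shows "(\<Sum>j=1..k. f (mono_of es j)) = sum_list (map f es)"
proof -
  have "(\<Sum>j=1..k. f (mono_of es j)) = (\<Sum>m<k. f (es ! m))"
    using assms by (simp add: sum.atLeast1_atMost_eq mono_of_def)
  also have "\<dots> = sum_list (map f es)"
    using assms by (simp add: sum_list_sum_nth atLeast0LessThan)
  finally show ?thesis .
qed

lemma mdeg_mono_of: "length es = k \<Longrightarrow> mdeg k (mono_of es) = sum_list es"
  using sum_mono_of[of es k id] by (simp add: mdeg_def)

fun Sq_list :: "nat \<Rightarrow> nat list \<Rightarrow> nat list list" where
  "Sq_list i [] = (if i = 0 then [[]] else [])"
| "Sq_list i (e # es) = concat (map (\<lambda>d. if odd (e choose d)
      then map ((#) (e + d)) (Sq_list (i - d) es) else []) [0..<Suc i])"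

lemma set_Sq_list_Cons:
  "set (Sq_list i (e # es)) =
     {(e + d) # r | d r. d \<le> i \<and> odd (e choose d) \<and> r \<in> set (Sq_list (i - d) es)}"
  by (auto simp: less_Suc_eq_le simp del: upt_Suc split: if_splits)

lemma set_Sq_list:
  "set (Sq_list i es) = {map2 (+) es ds | ds. length ds = length es \<and> sum_list ds = i
     \<and> list_all2 (\<lambda>e d. odd (e choose d)) es ds}"
proof (induction es arbitrary: i)
  case Nil
  then show ?case by auto
next
  case (Cons e es)
  show ?case
  proof (intro set_eqI iffI)
    fix x assume "x \<in> set (Sq_list i (e # es))"
    then obtain d ds where "d \<le> i" "odd (e choose d)" "x = (e + d) # map2 (+) es ds"
      "length ds = length es" "sum_list ds = i - d" "list_all2 (\<lambda>e d. odd (e choose d)) es ds"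
      unfolding set_Sq_list_Cons Cons.IH by blast
    then show "x \<in> {map2 (+) (e # es) ds | ds. length ds = length (e # es) \<and> sum_list ds = i
     \<and> list_all2 (\<lambda>e d. odd (e choose d)) (e # es) ds}"
      by (intro CollectI exI[of _ "d # ds"]) auto
  next
    fix x assume "x \<in> {map2 (+) (e # es) ds | ds. length ds = length (e # es) \<and> sum_list ds = i
     \<and> list_all2 (\<lambda>e d. odd (e choose d)) (e # es) ds}"
    then obtain d ds where "x = (e + d) # map2 (+) es ds" "length ds = length es"
      "d + sum_list ds = i" "odd (e choose d)" "list_all2 (\<lambda>e d. odd (e choose d)) es ds"
      by (auto simp: length_Suc_conv)
    then show "x \<in> set (Sq_list i (e # es))"
      unfolding set_Sq_list_Cons Cons.IH by fastforce
  qed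
qed

lemma length_Sq_list: "x \<in> set (Sq_list i es) \<Longrightarrow> length x = length es"
  unfolding set_Sq_list by auto

lemma Sq_mono_mono_of:
  assumes es: "length es = k"
  shows "Sq_mono k i (mono_of es) = mono_of ` set (Sq_list i es)"
proof -
  have admissible_iff:
    "(\<Sum>j=1..k. mono_of ds j) = i \<and> (\<forall>j\<in>{1..k}. odd (mono_of es j choose mono_of ds j))
     \<longleftrightarrow> sum_list ds = i \<and> list_all2 (\<lambda>e d. odd (e choose d)) es ds"
    if ds: "length ds = k" for ds
  proof -
    have "(\<forall>j\<in>{1..k}. odd (mono_of es j choose mono_of ds j))
        \<longleftrightarrow> (\<forall>m<k. odd (es ! m choose ds ! m))"
      using es ds unfolding image_Suc_lessThan[symmetric] by (auto simp: mono_of_def)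
    then show ?thesis
      using es ds by (simp add: sum_mono_of[of ds k id, simplified] list_all2_conv_all_nth)
  qed
  show ?thesis
  proof (intro set_eqI iffI)
    fix x assume "x \<in> Sq_mono k i (mono_of es)"
    then obtain d where x: "x = (\<lambda>n. mono_of es n + d n)" and d: "is_mono k d"
      "(\<Sum>j=1..k. d j) = i" "\<forall>j\<in>{1..k}. odd (mono_of es j choose d j)"
      unfolding Sq_mono_def by blast
    define ds where "ds = map d [1..<Suc k]"
    have ds: "d = mono_of ds" "length ds = k"
      using mono_of_map_upt_is_mono[OF d(1)] by (simp_all add: ds_def)
    with d admissible_iff have "map2 (+) es ds \<in> set (Sq_list i es)"
      unfolding set_Sq_list using es by auto
    moreover have "x = mono_of (map2 (+) es ds)"
      using x ds es by (simp add: mono_of_map2_add)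
    ultimately show "x \<in> mono_of ` set (Sq_list i es)" by blast
  next
    fix x assume "x \<in> mono_of ` set (Sq_list i es)"
    then obtain ds where x: "x = mono_of (map2 (+) es ds)" and ds: "length ds = k"
      "sum_list ds = i" "list_all2 (\<lambda>e d. odd (e choose d)) es ds"
      unfolding set_Sq_list using es by auto
    have "x = (\<lambda>n. mono_of es n + mono_of ds n)"
      using x ds es by (simp add: mono_of_map2_add)
    with ds admissible_iff[OF ds(1)] show "x \<in> Sq_mono k i (mono_of es)"
      unfolding Sq_mono_def by (blast intro: is_mono_mono_of)
  qed
qed

lemma Sq_singleton: "Sq k i {a} = Sq_mono k i a"
proof -
  have "{a' \<in> {a}. b \<in> Sq_mono k i a'} = (if b \<in> Sq_mono k i a then {a} else {})" for b
    by auto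
  then show ?thesis unfolding Sq_def by auto
qed

lemma padd_image_mono_of:
  assumes "A \<subseteq> {xs. length xs = k}" "B \<subseteq> {xs. length xs = k}"
  shows "padd (mono_of ` A) (mono_of ` B) = mono_of ` ((A - B) \<union> (B - A))"
  using inj_on_image_set_diff[OF inj_on_mono_of[of k], of A B]
    inj_on_image_set_diff[OF inj_on_mono_of[of k], of B A] assms
  by (auto simp: padd_def)

lemma psum_distinct: "distinct vs \<Longrightarrow> psum vs = set vs"
  by (induction vs) (auto simp: psum_def padd_def)

definition list_sym_diff :: "'a list \<Rightarrow> 'a list \<Rightarrow> 'a list" where
  "list_sym_diff xs ys = filter (\<lambda>x. x \<notin> set ys) xs @ filter (\<lambda>y. y \<notin> set xs) ys"

lemma set_list_sym_diff: "set (list_sym_diff xs ys) = (set xs - set ys) \<union> (set ys - set xs)"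
  by (auto simp: list_sym_diff_def)

text \<open>Exponent vectors of \<open>\<Sigma> Sq\<^sup>i(x\<^sup>w)\<close> over \<open>(i, w) \<in> gens\<close>; over \<open>\<bbbF>\<^sub>2\<close> the sum
  is a symmetric difference.\<close>

definition Sq_sum :: "(nat \<times> nat list) list \<Rightarrow> nat list list" where
  "Sq_sum gens = foldr (\<lambda>(i, w). list_sym_diff (Sq_list i w)) gens []"

lemma Sq_sum_simps [simp]:
  "Sq_sum [] = []"
  "Sq_sum ((i, w) # gens) = list_sym_diff (Sq_list i w) (Sq_sum gens)"
  by (simp_all add: Sq_sum_def)

lemma length_Sq_sum:
  "\<forall>(i, w)\<in>set gens. length w = k \<Longrightarrow> x \<in> set (Sq_sum gens) \<Longrightarrow> length x = k"
  by (induction gens) (auto simp: set_list_sym_diff dest: length_Sq_list)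

lemma Sq_sum_in_hit:
  "\<forall>(i, w)\<in>set gens. length w = k \<and> 0 < i \<and> i \<le> 2 ^ s \<Longrightarrow> mono_of ` set (Sq_sum gens) \<in> hit k s"
proof (induction gens)
  case Nil
  then show ?case by (simp add: hit.hit_zero)
next
  case (Cons g gens)
  obtain i w where g: "g = (i, w)" by fastforce
  with Cons.prems have w: "length w = k" "0 < i" "i \<le> 2 ^ s" by auto
  have lengths: "set (Sq_list i w) \<subseteq> {xs. length xs = k}" "set (Sq_sum gens) \<subseteq> {xs. length xs = k}"
    using w(1) Cons.prems length_Sq_sum[of gens k] by (auto dest: length_Sq_list)
  have "mono_of ` set (Sq_sum (g # gens)) = padd (Sq k i {mono_of w}) (mono_of ` set (Sq_sum gens))"
    by (simp add: g set_list_sym_diff padd_image_mono_of[OF lengths] Sq_singleton Sq_mono_mono_of[OF w(1)])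
  also have "\<dots> \<in> hit k s"
    using Cons w by (intro hit.hit_add hit.hit_gen) (auto simp: is_mono_mono_of)
  finally show ?case .
qed

definition list_omega :: "nat list \<Rightarrow> nat \<Rightarrow> nat" where
  "list_omega v i = sum_list (map (alpha (i - 1)) v)"

lemma omega_mono_of: "length v = k \<Longrightarrow> omega k (mono_of v) i = list_omega v i"
  unfolding omega_def list_omega_def by (rule sum_mono_of)

lemma list_omega_eq_0:
  assumes "\<forall>x\<in>set v. x < 2 ^ n" "n < i"
  shows "list_omega v i = 0"
proof -
  have "(2::nat) ^ n \<le> 2 ^ (i - 1)"
    using assms(2) by (intro power_increasing) auto
  then have "x < 2 ^ (i - 1)" if "x \<in> set v" for x
    using assms(1) that less_le_trans by blast
  then have "alpha (i - 1) x = 0" if "x \<in> set v" for x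
    using that by (simp add: alpha_def)
  then show ?thesis
    by (simp add: list_omega_def sum_list_eq_0_iff)
qed

lemma max_s_mono_of:
  assumes "length u = k" "\<forall>x\<in>set u. x < 2 ^ n" "0 < n" "0 < list_omega u n"
  shows "max_s k (mono_of u) = n"
proof -
  let ?S = "{i. 1 \<le> i \<and> 0 < list_omega u i}"
  have bound: "?S \<subseteq> {..n}"
  proof
    fix i assume "i \<in> ?S"
    then show "i \<in> {..n}"
      using list_omega_eq_0[OF assms(2), of i] by (cases "n < i") auto
  qed
  have "Max ?S = n"
    using finite_subset[OF bound] bound assms(3,4) by (intro Max_eqI) auto
  then show ?thesis
    by (simp add: max_s_def omega_mono_of[OF assms(1)])
qed

lemma lexordp_iff_nth:
  fixes xs ys :: "'a::linorder list"
  assumes "length xs = length ys"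
  shows "ord_class.lexordp xs ys \<longleftrightarrow> (\<exists>m<length xs. (\<forall>i<m. xs ! i = ys ! i) \<and> xs ! m < ys ! m)"
proof -
  have "take m xs = take m ys \<longleftrightarrow> (\<forall>i<m. xs ! i = ys ! i)" if "m < length xs" for m
    using that assms by (simp add: list_eq_iff_nth_eq)
  then show ?thesis
    unfolding lexordp_conv_lexord lexord_take_index_conv using assms by auto
qed

definition omega_seq :: "nat \<Rightarrow> nat list \<Rightarrow> nat list" where
  "omega_seq n v = map (list_omega v) [1..<Suc n]"

lemma lex_less_omega_mono_of:
  assumes "length v = k" "length u = k" "ord_class.lexordp (omega_seq n v) (omega_seq n u)"
  shows "lex_less (omega k (mono_of v)) (omega k (mono_of u))"
proof -
  obtain m where "m < n" "\<forall>i<m. list_omega v (Suc i) = list_omega u (Suc i)"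
    "list_omega v (Suc m) < list_omega u (Suc m)"
    using assms(3) by (auto simp: lexordp_iff_nth omega_seq_def nth_map_upt simp del: upt_Suc)
  then show ?thesis
    unfolding lex_less_def omega_mono_of[OF assms(1)] omega_mono_of[OF assms(2)]
    by (intro exI[of _ "Suc m"]) (auto simp: less_Suc_eq_0_disj)
qed

lemma omega_mono_of_eq:
  assumes "length v = k" "length u = k" "\<forall>x\<in>set v. x < 2 ^ n" "\<forall>x\<in>set u. x < 2 ^ n"
    and "omega_seq n v = omega_seq n u" "1 \<le> i"
  shows "omega k (mono_of v) i = omega k (mono_of u) i"
proof (cases "i \<le> n")
  case True
  then have "omega_seq n v ! (i - 1) = omega_seq n u ! (i - 1)"
    using assms(5) by simp
  with True assms(6) show ?thesis
    by (simp add: omega_mono_of assms(1,2) omega_seq_def nth_map_upt del: upt_Suc)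
next
  case False
  then show ?thesis
    using list_omega_eq_0 assms by (simp add: omega_mono_of)
qed

lemma sigma_less_mono_of:
  assumes "length v = k" "length u = k" "ord_class.lexordp v u"
  shows "sigma_less k (mono_of v) (mono_of u)"
proof -
  obtain m where "m < k" "\<forall>i<m. v ! i = u ! i" "v ! m < u ! m"
    using assms by (auto simp: lexordp_iff_nth)
  then show ?thesis
    unfolding sigma_less_def using assms(1,2)
    by (intro bexI[of _ "Suc m"]) (auto simp: mono_of_def)
qed

definition list_less :: "nat \<Rightarrow> nat list \<Rightarrow> nat list \<Rightarrow> bool" where
  "list_less n v u \<longleftrightarrow> ord_class.lexordp (omega_seq n v) (omega_seq n u)
     \<or> omega_seq n v = omega_seq n u \<and> ord_class.lexordp v u"

lemma mono_less_mono_of: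
  assumes "length v = k" "length u = k" "\<forall>x\<in>set v. x < 2 ^ n" "\<forall>x\<in>set u. x < 2 ^ n"
    and "list_less n v u"
  shows "mono_less k (mono_of v) (mono_of u)"
  using assms(5) lex_less_omega_mono_of[OF assms(1,2)] sigma_less_mono_of[OF assms(1,2)]
    omega_mono_of_eq[OF assms(1-4)]
  unfolding list_less_def mono_less_def by blast

text \<open>A certificate makes \<open>Sq_sum gens\<close> a hit element with leading monomial \<open>u\<close>;
  \<open>s + 1\<close> is \<open>max_s u\<close>, and \<open>n\<close> bounds the binary length of every exponent that occurs,
  so that \<open>\<omega>\<close>-vectors need only be compared in their first \<open>n\<close> entries.\<close>

definition certificate :: "nat \<Rightarrow> nat \<Rightarrow> nat list \<Rightarrow> (nat \<times> nat list) list \<Rightarrow> bool" where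
  "certificate n s u gens \<longleftrightarrow>
     (\<forall>x\<in>set u. x < 2 ^ Suc s) \<and> 0 < list_omega u (Suc s) \<and>
     (\<forall>(i, w)\<in>set gens. length w = length u \<and> 0 < i \<and> i \<le> 2 ^ s) \<and>
     u \<in> set (Sq_sum gens) \<and>
     (\<forall>v\<in>set (Sq_sum gens). (\<forall>x\<in>set v. x < 2 ^ n) \<and>
        (v \<noteq> u \<longrightarrow> sum_list v = sum_list u \<and> list_less n v u))"

lemma strictly_inadmissible_if_certificate:
  assumes "certificate n s u gens"
  shows "strictly_inadmissible (length u) (mono_of u)"
proof -
  let ?k = "length u" and ?S = "set (Sq_sum gens)"
  have u: "\<forall>x\<in>set u. x < 2 ^ Suc s" "0 < list_omega u (Suc s)" "u \<in> ?S"
    and gens: "\<forall>(i, w)\<in>set gens. length w = ?k \<and> 0 < i \<and> i \<le> 2 ^ s"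
    and smaller: "\<forall>v\<in>?S. (\<forall>x\<in>set v. x < 2 ^ n) \<and>
        (v \<noteq> u \<longrightarrow> sum_list v = sum_list u \<and> list_less n v u)"
    using assms by (simp_all add: certificate_def)
  have "\<forall>(i, w)\<in>set gens. length w = ?k"
    using gens by fast
  then have lengths: "?S \<subseteq> {xs. length xs = ?k}"
    using length_Sq_sum by blast
  define vs where "vs = remdups (filter (\<lambda>v. v \<noteq> u) (Sq_sum gens))"
  have set_vs: "set vs = ?S - {u}"
    by (auto simp: vs_def)
  have "inj_on mono_of (set vs)"
    using set_vs lengths by (blast intro: inj_on_subset[OF inj_on_mono_of])
  then have "distinct (map mono_of vs)"
    by (simp add: vs_def distinct_map)
  then have "padd {mono_of u} (psum (map mono_of vs)) = padd (mono_of ` {u}) (mono_of ` set vs)"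
    by (simp add: psum_distinct)
  also have "\<dots> = mono_of ` ?S"
  proof -
    have "({u} - set vs) \<union> (set vs - {u}) = ?S"
      using set_vs u(3) by blast
    moreover have "padd (mono_of ` {u}) (mono_of ` set vs) = mono_of ` (({u} - set vs) \<union> (set vs - {u}))"
      using set_vs lengths u(3) by (intro padd_image_mono_of) auto
    ultimately show ?thesis
      by simp
  qed
  also have "\<dots> \<in> hit ?k (max_s ?k (mono_of u) - 1)"
    using Sq_sum_in_hit[OF gens] max_s_mono_of[OF refl u(1) _ u(2)] by simp
  finally have "padd {mono_of u} (psum (map mono_of vs)) \<in> hit ?k (max_s ?k (mono_of u) - 1)" .
  moreover have "is_mono ?k v \<and> mdeg ?k v = mdeg ?k (mono_of u) \<and> mono_less ?k v (mono_of u)"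
    if v: "v \<in> set (map mono_of vs)" for v
  proof -
    obtain w where w: "v = mono_of w" "w \<in> ?S" "w \<noteq> u"
      using v set_vs by auto
    have len: "length w = ?k"
      using w(2) lengths by auto
    have "sum_list w = sum_list u" "list_less n w u"
      "\<forall>x\<in>set w. x < 2 ^ n" "\<forall>x\<in>set u. x < 2 ^ n"
      using smaller w(2,3) u(3) by auto
    then show ?thesis
      using is_mono_mono_of[OF len] mdeg_mono_of[OF len] mdeg_mono_of[OF refl, of u]
        mono_less_mono_of[OF len refl] w(1) by simp
  qed
  ultimately show ?thesis
    unfolding strictly_inadmissible_def by blast
qed

lemma strictly_inadmissible_if_certificate_map:
  assumes "certificate n s (map g [1..<Suc k]) gens"
    and "\<And>m. f m = (if m \<in> {1..k} then g m else 0)"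
  shows "strictly_inadmissible k f"
proof -
  have "f = mono_of (map g [1..<Suc k])"
    unfolding mono_of_map_upt using assms(2) by auto
  then show ?thesis
    using strictly_inadmissible_if_certificate[OF assms(1)] by (simp del: upt_Suc)
qed

lemma certificate_x2_x1_x3_x3_x3:
  "\<forall>i\<in>set [1..<6]. \<forall>j\<in>set [1..<6]. i < j \<longrightarrow>
     certificate 3 1 (map (\<lambda>n. if n = i then 2 else if n = j then 1 else 3) [1..<Suc 5])
       [(1, map (\<lambda>n. if n = i \<or> n = j then 1 else 3) [1..<Suc 5])]"
  by code_simp

lemma certificate_x3_x4_x3_x7_x7:
  "\<forall>i\<in>set [1..<6]. \<forall>j\<in>set [1..<6]. \<forall>t\<in>set [1..<6]. i < j \<and> j < t \<longrightarrow>
     certificate 4 2 (map (\<lambda>n. if n = i \<or> n = t then 3 else if n = j then 4 else 7) [1..<Suc 5])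
       [(1, map (\<lambda>n. if n = i \<or> n = j \<or> n = t then 3 else 7) [1..<Suc 5]),
        (2, map (\<lambda>n. if n = i then 2 else if n = j \<or> n = t then 3 else 7) [1..<Suc 5])]"
  by code_simp

theorem lemma3p7:
  fixes i j t u v :: nat
  assumes "{i, j, t, u, v} = {1, 2, 3, 4, 5}"
  shows "(i < j \<longrightarrow> strictly_inadmissible 5
            (\<lambda>n. if n = i then 2 else if n = j then 1
                  else if n = t \<or> n = u \<or> n = v then 3 else 0))
       \<and> (i < j \<and> j < t \<longrightarrow> strictly_inadmissible 5
            (\<lambda>n. if n = i then 3 else if n = j then 4 else if n = t then 3
                  else if n = u \<or> n = v then 7 else 0))"
proof -
  have range: "n \<in> {1..5} \<longleftrightarrow> n = i \<or> n = j \<or> n = t \<or> n = u \<or> n = v" for n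
  proof -
    have "n \<in> {1..5} \<longleftrightarrow> n \<in> {i, j, t, u, v}"
      unfolding assms by auto
    then show ?thesis
      by simp
  qed
  have ijt: "i \<in> set [1..<6]" "j \<in> set [1..<6]" "t \<in> set [1..<6]"
    using range[of i] range[of j] range[of t] by auto
  show ?thesis
  proof (intro conjI impI)
    assume "i < j"
    show "strictly_inadmissible 5 (\<lambda>n. if n = i then 2 else if n = j then 1
        else if n = t \<or> n = u \<or> n = v then 3 else 0)"
      by (rule strictly_inadmissible_if_certificate_map
          [OF certificate_x2_x1_x3_x3_x3[rule_format, OF ijt(1,2) \<open>i < j\<close>]])
        (simp only: range, use \<open>i < j\<close> in auto)
  next
    assume "i < j \<and> j < t"
    show "strictly_inadmissible 5 (\<lambda>n. if n = i then 3 else if n = j then 4 else if n = t then 3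
        else if n = u \<or> n = v then 7 else 0)"
      by (rule strictly_inadmissible_if_certificate_map
          [OF certificate_x3_x4_x3_x7_x7[rule_format, OF ijt \<open>i < j \<and> j < t\<close>]])
        (simp only: range, use \<open>i < j \<and> j < t\<close> in auto)
  qed
qed

end
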